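(* For $i=1,2$ let $\alpha_i\in[-1,1]$ and let $f_{\alpha_i}=h_i+\overline{g_i}\in S_H$ with $h_i(z)+g_i(z)=\dfrac{z(1-\alpha_i z)}{1-z^2}$, with dilatations $\omega_i=g_i'/h_i'$. If $\Re\big((1-\omega_1(z)\overline{\omega_2(z)})\,h_1'(z)\overline{h_2'(z)}\big)>0$ for all $z\in E$, then for every $0\le t\le1$ the map $f=tf_{\alpha_1}+(1-t)f_{\alpha_2}$ belongs to $S_H$ and maps $E$ onto a domain convex in the direction of the imaginary axis.
   Context: $E=\{z\in\mathbb{C}:|z|<1\}$. For a harmonic mapping $f=h+\overline{g}$ on $E$ with $h,g$ analytic, the dilatation is $\omega=g'/h'$. $S_H$ denotes the class of harmonic, univalent, sense-preserving mappings $f=h+\overline{g}$ of $E$ ($h'\ne0$, $|\omega|<1$) normalized by $f(0)=0$, $f_z(0)=1$. A domain $\Omega$ is convex in the direction of the imaginary axis if every line parallel to the imaginary axis has connected or empty intersection with $\Omega$. *)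

theory Defs
  imports "HOL-Analysis.Analysis"
begin

definition unit_disc :: "complex set" where
  "unit_disc = ball 0 1"

definition dilatation :: "(complex \<Rightarrow> complex) \<Rightarrow> (complex \<Rightarrow> complex) \<Rightarrow> complex \<Rightarrow> complex" where
  "dilatation h g z = deriv g z / deriv h z"

definition in_SH :: "(complex \<Rightarrow> complex) \<Rightarrow> (complex \<Rightarrow> complex) \<Rightarrow> bool" where
  "in_SH h g \<longleftrightarrow>
     h holomorphic_on unit_disc \<and> g holomorphic_on unit_disc \<and>
     inj_on (\<lambda>z. h z + cnj (g z)) unit_disc \<and>
     (\<forall>z\<in>unit_disc. deriv h z \<noteq> 0 \<and> cmod (dilatation h g z) < 1) \<and>
     h 0 + cnj (g 0) = 0 \<and> deriv h 0 = 1"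

definition convex_dir_imag :: "complex set \<Rightarrow> bool" where
  "convex_dir_imag \<Omega> \<longleftrightarrow> (\<forall>x::real. connected (\<Omega> \<inter> {z. Re z = x}))"

end

theory Submission
  imports Defs "HOL-Library.Quadratic_Discriminant"
begin

text \<open>
  Put \<open>H = t h\<^sub>1 + (1 - t) h\<^sub>2\<close>, \<open>G = t g\<^sub>1 + (1 - t) g\<^sub>2\<close>. The hypothesis on the
  dilatations is exactly what makes \<open>|G'| < |H'|\<close> on \<open>E\<close>, and \<open>H + G = \<phi>\<^sub>b\<close> with
  \<open>\<phi>\<^sub>b(z) = z(1 - bz)/(1 - z\<^sup>2)\<close> and \<open>b = t\<alpha>\<^sub>1 + (1 - t)\<alpha>\<^sub>2 \<in> [-1, 1]\<close>.
  In the half-plane coordinate \<open>\<zeta> = (1 + z)/(1 - z)\<close> one has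
  \<open>\<phi>\<^sub>b = (1 - b)/4 \<zeta> - (1 + b)/(4\<zeta>) + b/2\<close>, so the preimage of every vertical line is a
  smooth curve on which \<open>Im \<phi>\<^sub>b\<close> increases strictly. Along such a curve the velocity
  \<open>u + v\<close> of \<open>H + G\<close> points straight up while \<open>|v| < |u|\<close> for the contributions
  \<open>u, v\<close> of \<open>H, G\<close>; hence \<open>Im (H + conj G) = Im H - Im G\<close> increases strictly too.
  This is the shear construction of Clunie and Sheil-Small: it gives injectivity of
  \<open>H + conj G\<close> and shows that each vertical line meets its image in a connected set.
\<close>

lemma open_unit_disc: "open unit_disc"
  by (simp add: unit_disc_def)

lemma has_vector_derivative_Re:
  assumes "(f has_vector_derivative f') (at t)"
  shows "((\<lambda>t. Re (f t)) has_real_derivative Re f') (at t)"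
proof -
  have "((\<lambda>t. Re (f t)) has_derivative (\<lambda>h. h * Re f')) (at t)"
    using has_derivative_Re[OF assms[unfolded has_vector_derivative_def]] by simp
  then show ?thesis by (simp add: has_field_derivative_def mult.commute[of _ "Re f'"])
qed

lemma has_vector_derivative_Im:
  assumes "(f has_vector_derivative f') (at t)"
  shows "((\<lambda>t. Im (f t)) has_real_derivative Im f') (at t)"
proof -
  have "((\<lambda>t. Im (f t)) has_derivative (\<lambda>h. h * Im f')) (at t)"
    using has_derivative_Im[OF assms[unfolded has_vector_derivative_def]] by simp
  then show ?thesis by (simp add: has_field_derivative_def mult.commute[of _ "Im f'"])
qed

lemma Im_less_of_norm_less:
  fixes u v :: complex
  assumes "cmod v < cmod u" "Re (u + v) = 0" "0 < Im (u + v)"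
  shows "Im v < Im u"
proof -
  have "(cmod v)\<^sup>2 < (cmod u)\<^sup>2" using assms(1) by (simp add: power_strict_mono)
  moreover have "Re v = - Re u" using assms(2) by simp
  ultimately have "(Im v)\<^sup>2 < (Im u)\<^sup>2" by (simp add: cmod_power2)
  then have "0 < (Im u - Im v) * (Im u + Im v)" by (simp add: power2_eq_square algebra_simps)
  with assms(3) show ?thesis by (simp add: zero_less_mult_iff)
qed

definition vertical_level_curve :: "(complex \<Rightarrow> complex) \<Rightarrow> real \<Rightarrow> (real \<Rightarrow> complex) \<Rightarrow> bool" where
  "vertical_level_curve F c \<Gamma> \<longleftrightarrow>
     range \<Gamma> = {z \<in> unit_disc. Re (F z) = c} \<and>
     (\<forall>t. \<Gamma> differentiable (at t)) \<and>
     (\<forall>t. \<exists>D>0. ((\<lambda>t. Im (F (\<Gamma> t))) has_real_derivative D) (at t))"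

lemma Im_shear_has_pos_derivative_on_level_curve:
  assumes hol: "h holomorphic_on unit_disc" "g holomorphic_on unit_disc"
    and dil: "\<And>z. z \<in> unit_disc \<Longrightarrow> cmod (deriv g z) < cmod (deriv h z)"
    and F: "\<And>z. z \<in> unit_disc \<Longrightarrow> h z + g z = F z"
    and \<Gamma>: "vertical_level_curve F c \<Gamma>"
  shows "\<exists>D>0. ((\<lambda>t. Im (h (\<Gamma> t) + cnj (g (\<Gamma> t)))) has_real_derivative D) (at t)"
proof -
  have \<Gamma>_in: "\<Gamma> s \<in> unit_disc" and \<Gamma>_Re: "Re (F (\<Gamma> s)) = c" for s
    using \<Gamma> unfolding vertical_level_curve_def by auto
  define \<Gamma>' where "\<Gamma>' = vector_derivative \<Gamma> (at t)"
  define u where "u = \<Gamma>' * deriv h (\<Gamma> t)"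
  define v where "v = \<Gamma>' * deriv g (\<Gamma> t)"
  have "(\<Gamma> has_vector_derivative \<Gamma>') (at t)"
    using \<Gamma> by (simp add: vertical_level_curve_def vector_derivative_works \<Gamma>'_def)
  then have hd: "((\<lambda>t. h (\<Gamma> t)) has_vector_derivative u) (at t)"
    and gd: "((\<lambda>t. g (\<Gamma> t)) has_vector_derivative v) (at t)"
    using field_vector_diff_chain_at holomorphic_derivI[OF _ open_unit_disc \<Gamma>_in] hol
    by (fastforce simp: u_def v_def o_def)+
  have Fd: "((\<lambda>t. F (\<Gamma> t)) has_vector_derivative u + v) (at t)"
    using has_vector_derivative_add[OF hd gd] by (simp add: F[OF \<Gamma>_in])
  have "((\<lambda>t. Re (F (\<Gamma> t))) has_real_derivative 0) (at t)"
    by (simp add: \<Gamma>_Re)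
  then have Re_uv: "Re (u + v) = 0"
    using DERIV_unique has_vector_derivative_Re[OF Fd] by blast
  obtain D where "0 < D" "((\<lambda>t. Im (F (\<Gamma> t))) has_real_derivative D) (at t)"
    using \<Gamma> unfolding vertical_level_curve_def by blast
  then have Im_uv: "0 < Im (u + v)"
    using DERIV_unique has_vector_derivative_Im[OF Fd] by metis
  then have "\<Gamma>' \<noteq> 0" by (auto simp: u_def v_def)
  then have "cmod v < cmod u" using dil[OF \<Gamma>_in] by (simp add: u_def v_def norm_mult)
  then have "0 < Im u - Im v" using Im_less_of_norm_less[OF _ Re_uv Im_uv] by simp
  moreover have "((\<lambda>t. Im (h (\<Gamma> t) + cnj (g (\<Gamma> t)))) has_real_derivative Im u - Im v) (at t)"
    using DERIV_diff[OF has_vector_derivative_Im[OF hd] has_vector_derivative_Im[OF gd]] by simp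
  ultimately show ?thesis by blast
qed

lemma Im_shear_strict_mono_on_level_curve:
  assumes "h holomorphic_on unit_disc" "g holomorphic_on unit_disc"
    and "\<And>z. z \<in> unit_disc \<Longrightarrow> cmod (deriv g z) < cmod (deriv h z)"
    and "\<And>z. z \<in> unit_disc \<Longrightarrow> h z + g z = F z"
    and "vertical_level_curve F c \<Gamma>"
  shows "strict_mono (\<lambda>t. Im (h (\<Gamma> t) + cnj (g (\<Gamma> t))))"
proof (rule strict_monoI)
  fix s t :: real assume "s < t"
  then show "Im (h (\<Gamma> s) + cnj (g (\<Gamma> s))) < Im (h (\<Gamma> t) + cnj (g (\<Gamma> t)))"
    using DERIV_pos_imp_increasing[of s t] Im_shear_has_pos_derivative_on_level_curve[OF assms]
    by blast
qed

lemma continuous_on_shear_level_curve: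
  assumes "h holomorphic_on unit_disc" "g holomorphic_on unit_disc" "vertical_level_curve F c \<Gamma>"
  shows "continuous_on UNIV (\<lambda>t. h (\<Gamma> t) + cnj (g (\<Gamma> t)))"
proof -
  have "\<forall>t. isCont \<Gamma> t"
    using assms(3) differentiable_imp_continuous_within unfolding vertical_level_curve_def by blast
  then have "continuous_on UNIV \<Gamma>"
    by (simp add: continuous_at_imp_continuous_on)
  moreover have "range \<Gamma> \<subseteq> unit_disc"
    using assms(3) unfolding vertical_level_curve_def by blast
  ultimately have "continuous_on UNIV (\<lambda>t. h (\<Gamma> t))" "continuous_on UNIV (\<lambda>t. g (\<Gamma> t))"
    using continuous_on_compose2 assms(1,2)[THEN holomorphic_on_imp_continuous_on] by blast+
  then show ?thesis by (intro continuous_intros)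
qed

lemma shear_image_vertical_line:
  assumes "\<And>z. z \<in> unit_disc \<Longrightarrow> h z + g z = F z" and "vertical_level_curve F c \<Gamma>"
  shows "(\<lambda>z. h z + cnj (g z)) ` unit_disc \<inter> {w. Re w = c} = range (\<lambda>t. h (\<Gamma> t) + cnj (g (\<Gamma> t)))"
proof -
  have Re_eq: "Re (h z + cnj (g z)) = Re (F z)" if "z \<in> unit_disc" for z
    using arg_cong[OF assms(1)[OF that], of Re] by simp
  have \<Gamma>: "range \<Gamma> = {z \<in> unit_disc. Re (F z) = c}"
    using assms(2) by (simp add: vertical_level_curve_def)
  show ?thesis
  proof (intro equalityI subsetI)
    fix w assume "w \<in> (\<lambda>z. h z + cnj (g z)) ` unit_disc \<inter> {w. Re w = c}"
    then obtain z where "z \<in> unit_disc" "Re (F z) = c" "w = h z + cnj (g z)"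
      using Re_eq by auto
    moreover from this obtain t where "z = \<Gamma> t"
      using \<Gamma> by (metis (mono_tags, lifting) mem_Collect_eq rangeE)
    ultimately show "w \<in> range (\<lambda>t. h (\<Gamma> t) + cnj (g (\<Gamma> t)))" by blast
  next
    fix w assume "w \<in> range (\<lambda>t. h (\<Gamma> t) + cnj (g (\<Gamma> t)))"
    then obtain t where "w = h (\<Gamma> t) + cnj (g (\<Gamma> t))" by blast
    moreover have "\<Gamma> t \<in> unit_disc" "Re (F (\<Gamma> t)) = c" using \<Gamma> by auto
    ultimately show "w \<in> (\<lambda>z. h z + cnj (g z)) ` unit_disc \<inter> {w. Re w = c}"
      using Re_eq by auto
  qed
qed

theorem shear_inj_on_convex_dir_imag:
  assumes hol: "h holomorphic_on unit_disc" "g holomorphic_on unit_disc"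
    and dil: "\<And>z. z \<in> unit_disc \<Longrightarrow> cmod (deriv g z) < cmod (deriv h z)"
    and F: "\<And>z. z \<in> unit_disc \<Longrightarrow> h z + g z = F z"
    and curves: "\<And>z. z \<in> unit_disc \<Longrightarrow> \<exists>\<Gamma>. vertical_level_curve F (Re (F z)) \<Gamma>"
  shows "inj_on (\<lambda>z. h z + cnj (g z)) unit_disc"
    and "convex_dir_imag ((\<lambda>z. h z + cnj (g z)) ` unit_disc)"
proof -
  define f where "f z = h z + cnj (g z)" for z
  have Re_f: "Re (f z) = Re (F z)" if "z \<in> unit_disc" for z
    using arg_cong[OF F[OF that], of Re] by (simp add: f_def)
  show "inj_on f unit_disc"
  proof (rule inj_onI)
    fix z w assume z: "z \<in> unit_disc" and w: "w \<in> unit_disc" and "f z = f w"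
    obtain \<Gamma> where \<Gamma>: "vertical_level_curve F (Re (F z)) \<Gamma>"
      using curves[OF z] by blast
    moreover have "Re (F w) = Re (F z)"
      using Re_f[OF z] Re_f[OF w] \<open>f z = f w\<close> by simp
    ultimately obtain s t where "z = \<Gamma> s" "w = \<Gamma> t"
      using z w unfolding vertical_level_curve_def by (metis (mono_tags, lifting) mem_Collect_eq rangeE)
    moreover have "strict_mono (\<lambda>t. Im (f (\<Gamma> t)))"
      unfolding f_def by (rule Im_shear_strict_mono_on_level_curve[OF hol dil F \<Gamma>])
    ultimately show "z = w"
      using \<open>f z = f w\<close> strict_mono_eq by metis
  qed
  show "convex_dir_imag (f ` unit_disc)"
    unfolding convex_dir_imag_def
  proof
    fix x :: real
    show "connected (f ` unit_disc \<inter> {w. Re w = x})"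
    proof (cases "f ` unit_disc \<inter> {w. Re w = x} = {}")
      case False
      then obtain z where z: "z \<in> unit_disc" "Re (f z) = x"
        by auto
      moreover have "Re (F z) = x" using Re_f z by simp
      ultimately obtain \<Gamma> where \<Gamma>: "vertical_level_curve F x \<Gamma>"
        using curves[OF z(1)] by auto
      have "continuous_on UNIV (\<lambda>t. f (\<Gamma> t))"
        unfolding f_def by (rule continuous_on_shear_level_curve[OF hol \<Gamma>])
      then have "connected (range (\<lambda>t. f (\<Gamma> t)))"
        by (rule connected_continuous_image) simp
      then show ?thesis
        using shear_image_vertical_line[OF F \<Gamma>] by (simp add: f_def)
    qed simp
  qed
qed

definition phi :: "real \<Rightarrow> complex \<Rightarrow> complex" where
  "phi a z = z * (1 - of_real a * z) / (1 - z\<^sup>2)"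

lemma phi_cayley:
  assumes "\<zeta> \<noteq> 0" "\<zeta> + 1 \<noteq> 0"
  shows "phi a ((\<zeta> - 1) / (\<zeta> + 1)) = of_real ((1 - a) / 4) * \<zeta> - of_real ((1 + a) / 4) / \<zeta> + of_real (a / 2)"
proof -
  have "1 - ((\<zeta> - 1) / (\<zeta> + 1))\<^sup>2 = ((\<zeta> + 1)\<^sup>2 - (\<zeta> - 1)\<^sup>2) / (\<zeta> + 1)\<^sup>2"
    using assms(2) unfolding power_divide by (simp add: diff_divide_distrib)
  also have "\<dots> = 4 * \<zeta> / (\<zeta> + 1)\<^sup>2"
    by (simp add: power2_eq_square algebra_simps)
  finally have "1 - ((\<zeta> - 1) / (\<zeta> + 1))\<^sup>2 = 4 * \<zeta> / (\<zeta> + 1)\<^sup>2" .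
  moreover have "(\<zeta> - 1) / (\<zeta> + 1) * (1 - of_real a * ((\<zeta> - 1) / (\<zeta> + 1)))
      = (\<zeta> - 1) * (\<zeta> + 1 - of_real a * (\<zeta> - 1)) / (\<zeta> + 1)\<^sup>2"
    using assms(2) by (simp add: field_simps power2_eq_square)
  ultimately have "phi a ((\<zeta> - 1) / (\<zeta> + 1)) = (\<zeta> - 1) * (\<zeta> + 1 - of_real a * (\<zeta> - 1)) / (4 * \<zeta>)"
    using assms unfolding phi_def by (simp add: power2_eq_square)
  also have "\<dots> = of_real ((1 - a) / 4) * \<zeta> - of_real ((1 + a) / 4) / \<zeta> + of_real (a / 2)"
    using assms(1) by (simp add: field_simps)
  finally show ?thesis .
qed

text \<open>The point of \<open>E\<close> corresponding to \<open>\<zeta> = x (1 + i t)\<close> under \<open>\<zeta> = (1 + z)/(1 - z)\<close>.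
  For fixed \<open>t\<close> the real part of \<open>\<phi>\<^sub>a\<close> is increasing in \<open>x > 0\<close>, so each level set of
  \<open>Re \<phi>\<^sub>a\<close> is a graph \<open>x = x(t)\<close> over the ray parameter \<open>t\<close>.\<close>
definition cayley_point :: "real \<Rightarrow> real \<Rightarrow> complex" where
  "cayley_point x t = (Complex x (x * t) - 1) / (Complex x (x * t) + 1)"

lemma phi_cayley_point:
  assumes "0 < x"
  shows "phi a (cayley_point x t) = Complex ((1 - a) / 4 * x - (1 + a) / 4 / (x * (1 + t\<^sup>2)) + a / 2)
                                            (t * ((1 - a) / 4 * x + (1 + a) / 4 / (x * (1 + t\<^sup>2))))"
proof -
  define D where "D = x * (1 + t\<^sup>2)"
  have nz: "Complex x (x * t) \<noteq> 0" "Complex x (x * t) + 1 \<noteq> 0" using assms by (auto simp: complex_eq_iff)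
  have "0 < D" using assms by (simp add: D_def add_pos_nonneg)
  moreover have "x\<^sup>2 + (x * t)\<^sup>2 = x * D" by (simp add: D_def algebra_simps power2_eq_square)
  ultimately have inv: "1 / Complex x (x * t) = Complex (1 / D) (- t / D)"
    using assms by (simp add: complex_eq_iff Re_divide Im_divide)
  have div: "of_real B / Complex x (x * t) = of_real B * (1 / Complex x (x * t))" for B
    by simp
  show ?thesis
    unfolding cayley_point_def phi_cayley[OF nz] div inv D_def[symmetric]
    using \<open>0 < D\<close> by (simp add: complex_eq_iff field_simps)
qed

lemma cayley_point_in_unit_disc:
  assumes "0 < x"
  shows "cayley_point x t \<in> unit_disc"
proof -
  let ?\<zeta> = "Complex x (x * t)"
  have "(cmod (?\<zeta> - 1))\<^sup>2 < (cmod (?\<zeta> + 1))\<^sup>2"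
    using assms by (simp only: cmod_power2) (simp add: power2_eq_square algebra_simps)
  then have "cmod (?\<zeta> - 1) < cmod (?\<zeta> + 1)"
    by (meson norm_ge_zero power_less_imp_less_base)
  then show ?thesis
    by (auto simp: unit_disc_def cayley_point_def norm_divide divide_less_eq)
qed

lemma unit_disc_imp_cayley_point:
  assumes "z \<in> unit_disc"
  obtains x t where "0 < x" "z = cayley_point x t"
proof -
  define \<zeta> where "\<zeta> = (1 + z) / (1 - z)"
  have "cmod z < 1" using assms by (simp add: unit_disc_def)
  then have nz: "1 - z \<noteq> 0" by auto
  have "(cmod z)\<^sup>2 < 1" "0 < (cmod (1 - z))\<^sup>2"
    using \<open>cmod z < 1\<close> nz power_strict_mono[of "cmod z" 1 2] by simp_all
  then have "(Re z)\<^sup>2 + (Im z)\<^sup>2 < 1" "0 < (1 - Re z)\<^sup>2 + (Im z)\<^sup>2"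
    by (simp_all add: cmod_power2)
  then have x: "0 < Re \<zeta>"
    by (simp add: \<zeta>_def Re_divide power2_eq_square algebra_simps)
  have "Complex (Re \<zeta>) (Re \<zeta> * (Im \<zeta> / Re \<zeta>)) = \<zeta>"
    using x by (simp add: complex_eq_iff)
  moreover have "z = (\<zeta> - 1) / (\<zeta> + 1)"
    using nz by (simp add: \<zeta>_def field_simps)
  ultimately have "z = cayley_point (Re \<zeta>) (Im \<zeta> / Re \<zeta>)"
    by (simp add: cayley_point_def)
  with x show thesis by (rule that)
qed

lemma Re_phi_cayley_point_strict_mono:
  assumes "-1 \<le> a" "a \<le> 1" "0 < x" "x < y"
  shows "Re (phi a (cayley_point x t)) < Re (phi a (cayley_point y t))"
proof -
  have s: "0 < 1 + t\<^sup>2" by (simp add: add_pos_nonneg)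
  have "(1 - a) / 4 * x \<le> (1 - a) / 4 * y"
    using assms by (intro mult_left_mono) auto
  moreover have "(1 + a) / 4 / (y * (1 + t\<^sup>2)) \<le> (1 + a) / 4 / (x * (1 + t\<^sup>2))"
    using assms s by (intro divide_left_mono mult_right_mono mult_pos_pos) auto
  moreover have "(1 - a) / 4 * x < (1 - a) / 4 * y \<or> (1 + a) / 4 / (y * (1 + t\<^sup>2)) < (1 + a) / 4 / (x * (1 + t\<^sup>2))"
  proof (cases "a = 1")
    case True
    have "(1 + a) / 4 / (y * (1 + t\<^sup>2)) < (1 + a) / 4 / (x * (1 + t\<^sup>2))"
      using assms s True by (intro divide_strict_left_mono mult_strict_right_mono mult_pos_pos) auto
    then show ?thesis ..
  next
    case False
    then have "(1 - a) / 4 * x < (1 - a) / 4 * y"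
      using assms by (intro mult_strict_left_mono) auto
    then show ?thesis ..
  qed
  moreover have "0 < y" using assms by linarith
  ultimately show ?thesis
    unfolding phi_cayley_point[OF \<open>0 < x\<close>] phi_cayley_point[OF \<open>0 < y\<close>] complex.sel
    by linarith
qed

lemma Re_phi_cayley_point_eqI:
  assumes "0 < y" "(1 - a) / 4 * y\<^sup>2 - (c - a / 2) * y = (1 + a) / 4 / (1 + t\<^sup>2)"
  shows "Re (phi a (cayley_point y t)) = c"
proof -
  have "(1 + a) / 4 / (y * (1 + t\<^sup>2)) = (1 + a) / 4 / (1 + t\<^sup>2) / y"
    by (simp add: mult.commute)
  also have "\<dots> = (1 - a) / 4 * y - (c - a / 2)"
    unfolding assms(2)[symmetric] using \<open>0 < y\<close> by (simp add: power2_eq_square field_simps)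
  finally show ?thesis
    using phi_cayley_point[OF \<open>0 < y\<close>, of a t] by simp
qed

lemma level_radius_exists_one:
  assumes "c < 1 / 2"
  obtains x where "\<And>t. 0 < x t" "\<And>t. Re (phi 1 (cayley_point (x t) t)) = c"
    "\<And>t. x differentiable (at t)"
proof
  define x where "x t = - 1 / (2 * (1 + t\<^sup>2) * (c - 1 / 2))" for t
  have s: "0 < 1 + t\<^sup>2" for t :: real by (simp add: add_pos_nonneg)
  show "0 < x t" for t
    unfolding x_def using assms s[of t] by (intro divide_neg_neg mult_pos_neg) auto
  moreover have "(1 - 1) / 4 * (x t)\<^sup>2 - (c - 1 / 2) * x t = (1 + 1) / 4 / (1 + t\<^sup>2)" for t
    using assms s[of t] by (simp add: x_def)
  ultimately show "Re (phi 1 (cayley_point (x t) t)) = c" for t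
    by (intro Re_phi_cayley_point_eqI) simp_all
  show "x differentiable (at t)" for t
    unfolding x_def using assms s[of t] by (intro derivative_intros) auto
qed

lemma level_radius_exists_less_one:
  assumes a: "-1 \<le> a" "a < 1" and c: "a = -1 \<Longrightarrow> a / 2 < c"
  obtains x where "\<And>t. 0 < x t" "\<And>t. Re (phi a (cayley_point (x t) t)) = c"
    "\<And>t. x differentiable (at t)"
proof
  define d where "d = c - a / 2"
  define A where "A = (1 - a) / 4"
  define B where "B t = (1 + a) / 4 / (1 + t\<^sup>2)" for t
  define q where "q t = d\<^sup>2 + 4 * A * B t" for t
  define x where "x t = (d + sqrt (q t)) / (2 * A)" for t
  have s: "0 < 1 + t\<^sup>2" for t :: real by (simp add: add_pos_nonneg)
  have A: "0 < A" using a by (simp add: A_def)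
  have dq: "d\<^sup>2 < q t" if "d \<le> 0" for t
  proof -
    have "-1 < a" using a c that by (cases "a = -1") (auto simp: d_def)
    then show ?thesis using A s[of t] by (simp add: q_def B_def)
  qed
  have q: "0 < q t" for t
  proof (cases "0 < d")
    case True then show ?thesis using A a s[of t] by (simp add: q_def B_def add_pos_nonneg)
  next
    case False then show ?thesis using dq[of t] zero_le_power2[of d] by linarith
  qed
  have pos: "0 < d + sqrt (q t)" for t
  proof (cases "0 < d")
    case True then show ?thesis using q[of t] by (simp add: add_pos_nonneg)
  next
    case False
    then have "sqrt (d\<^sup>2) < sqrt (q t)"
      by (intro real_sqrt_less_mono dq) simp
    then show ?thesis by simp
  qed
  show "0 < x t" for t using pos[of t] A by (simp add: x_def)
  moreover have "A * (x t)\<^sup>2 + (- d) * x t + (- B t) = 0" for t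
    using discriminant_nonneg[of A "- d" "- B t" "x t"] A q[of t]
    by (simp add: discrim_def q_def x_def)
  ultimately show "Re (phi a (cayley_point (x t) t)) = c" for t
    by (intro Re_phi_cayley_point_eqI) (simp_all add: A_def B_def d_def algebra_simps)
  have "sqrt differentiable (at (q t))" for t
    using DERIV_real_sqrt[OF q] real_differentiable_def by blast
  moreover have "q differentiable (at t)" for t
    unfolding q_def B_def using s[of t] by (intro derivative_intros) auto
  ultimately show "x differentiable (at t)" for t
    unfolding x_def using A differentiable_compose[of sqrt q] by (intro derivative_intros) auto
qed

lemma level_radius_exists:
  assumes a: "-1 \<le> a" "a \<le> 1" and "0 < x0" and c: "Re (phi a (cayley_point x0 t0)) = c"
  obtains x where "\<And>t. 0 < x t" "\<And>t. Re (phi a (cayley_point (x t) t)) = c"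
    "\<And>t. x differentiable (at t)"
proof -
  have c0: "c = (1 - a) / 4 * x0 - (1 + a) / 4 / (x0 * (1 + t0\<^sup>2)) + a / 2"
    using c phi_cayley_point[OF \<open>0 < x0\<close>, of a t0] by simp
  have "0 < x0 * (1 + t0\<^sup>2)" using \<open>0 < x0\<close> by (simp add: add_pos_nonneg)
  consider "a = 1" | "a < 1" using a by linarith
  then show thesis
  proof cases
    case 1
    then have "c < 1 / 2" using c0 \<open>0 < x0 * (1 + t0\<^sup>2)\<close> by simp
    with 1 show thesis using level_radius_exists_one that by blast
  next
    case 2
    moreover have "a / 2 < c" if "a = -1" using c0 that \<open>0 < x0\<close> by simp
    ultimately show thesis using level_radius_exists_less_one[OF a(1)] that by blast
  qed
qed

lemma cayley_point_curve_differentiable: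
  assumes "x differentiable (at t)" "0 < x t"
  shows "(\<lambda>t. cayley_point (x t) t) differentiable (at t)"
proof -
  have eq: "Complex (x s) (x s * s) = of_real (x s) * (1 + \<i> * of_real s)" for s
    by (simp add: complex_eq_iff)
  have "(\<lambda>s. complex_of_real (x s)) differentiable (at t)"
    using differentiable_compose[OF of_real_differentiable assms(1)] by (simp add: o_def)
  then show ?thesis
    unfolding cayley_point_def eq using assms(2)
    by (intro derivative_intros) (auto simp: complex_eq_iff)
qed

lemma t_sqrt_has_pos_derivative:
  fixes d K t :: real
  assumes "0 \<le> K" "0 < d\<^sup>2 + K"
  obtains D where "0 < D" "((\<lambda>t. t * sqrt (d\<^sup>2 + K / (1 + t\<^sup>2))) has_real_derivative D) (at t)"
proof -
  define s where "s = 1 + t\<^sup>2"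
  define q where "q = d\<^sup>2 + K / s"
  have s: "0 < s" by (simp add: s_def add_pos_nonneg)
  have "0 < q"
  proof (cases "K = 0")
    case True then show ?thesis using assms by (simp add: q_def)
  next
    case False then show ?thesis using assms s by (simp add: q_def add_nonneg_pos)
  qed
  define D where "D = sqrt q + t * (inverse (sqrt q) / 2 * (- K * (2 * t) / s\<^sup>2))"
  have "((\<lambda>t. t * sqrt (d\<^sup>2 + K / (1 + t\<^sup>2))) has_real_derivative D) (at t)"
    unfolding D_def using \<open>0 < q\<close> s
    by (auto intro!: derivative_eq_intros simp: q_def s_def power2_eq_square)
  moreover have "D = (d\<^sup>2 + K / s\<^sup>2) / sqrt q"
  proof -
    have "D = (q - K * t\<^sup>2 / s\<^sup>2) / sqrt q"
      using \<open>0 < q\<close> by (simp add: D_def field_simps power2_eq_square)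
    moreover have "K / s - K * t\<^sup>2 / s\<^sup>2 = K * (s - t\<^sup>2) / s\<^sup>2"
      using s by (simp add: field_simps power2_eq_square)
    moreover have "s - t\<^sup>2 = 1" by (simp add: s_def)
    ultimately show ?thesis by (simp add: q_def)
  qed
  moreover have "0 < d\<^sup>2 + K / s\<^sup>2"
    using assms s by (cases "K = 0") (auto intro: add_nonneg_pos)
  ultimately show thesis
    using \<open>0 < q\<close> by (intro that[of D]) auto
qed

text \<open>On the level curve \<open>Re \<phi>\<^sub>a = c\<close> one has \<open>Im \<phi>\<^sub>a = t (P + Q)\<close>, where \<open>P - Q = c - a/2\<close> and
  \<open>4PQ = (1 - a\<^sup>2)/(4(1 + t\<^sup>2))\<close>; this determines \<open>P + Q\<close>.\<close>
definition level_height :: "real \<Rightarrow> real \<Rightarrow> real \<Rightarrow> real" where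
  "level_height a c t = t * sqrt ((c - a / 2)\<^sup>2 + (1 - a\<^sup>2) / 4 / (1 + t\<^sup>2))"

lemma Im_phi_cayley_point_on_level:
  assumes "-1 \<le> a" "a \<le> 1" "0 < x" and c: "Re (phi a (cayley_point x t)) = c"
  shows "Im (phi a (cayley_point x t)) = level_height a c t"
    and "0 < (c - a / 2)\<^sup>2 + (1 - a\<^sup>2) / 4"
proof -
  define s where "s = 1 + t\<^sup>2"
  define P where "P = (1 - a) / 4 * x"
  define Q where "Q = (1 + a) / 4 / (x * s)"
  have s: "0 < s" by (simp add: s_def add_pos_nonneg)
  have "0 \<le> P" "0 \<le> Q" using assms s by (auto simp: P_def Q_def)
  moreover have "0 < P \<or> 0 < Q" using assms s by (cases "a = 1") (auto simp: P_def Q_def)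
  ultimately have PQ: "0 < P + Q" by linarith
  have d: "c - a / 2 = P - Q"
    using c phi_cayley_point[OF \<open>0 < x\<close>, of a t] by (simp add: P_def Q_def s_def)
  have "4 * P * Q = (1 - a\<^sup>2) / 4 / s"
    using \<open>0 < x\<close> s by (simp add: P_def Q_def field_simps power2_eq_square)
  then have q: "(c - a / 2)\<^sup>2 + (1 - a\<^sup>2) / 4 / s = (P + Q)\<^sup>2"
    unfolding d by (simp add: power2_eq_square algebra_simps)
  have "Im (phi a (cayley_point x t)) = t * (P + Q)"
    using phi_cayley_point[OF \<open>0 < x\<close>, of a t] by (simp add: P_def Q_def s_def)
  also have "\<dots> = level_height a c t"
    unfolding level_height_def s_def[symmetric] q using PQ by simp
  finally show "Im (phi a (cayley_point x t)) = level_height a c t" .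
  have "(1 - a\<^sup>2) / 4 / s \<le> (1 - a\<^sup>2) / 4"
  proof -
    have "0 \<le> (1 - a\<^sup>2) / 4" using assms by (simp add: abs_square_le_1)
    moreover have "1 \<le> s" by (simp add: s_def)
    ultimately show ?thesis using divide_left_mono[of 1 s "(1 - a\<^sup>2) / 4"] by simp
  qed
  moreover have "0 < (P + Q)\<^sup>2" using PQ by simp
  ultimately show "0 < (c - a / 2)\<^sup>2 + (1 - a\<^sup>2) / 4"
    using q by linarith
qed

lemma phi_vertical_level_curve:
  assumes a: "-1 \<le> a" "a \<le> 1" and "z \<in> unit_disc"
  shows "\<exists>\<Gamma>. vertical_level_curve (phi a) (Re (phi a z)) \<Gamma>"
proof -
  define c where "c = Re (phi a z)"
  obtain x0 t0 where "0 < x0" "z = cayley_point x0 t0"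
    using unit_disc_imp_cayley_point[OF \<open>z \<in> unit_disc\<close>] .
  then obtain x where x_pos: "\<And>t. 0 < x t" and x_level: "\<And>t. Re (phi a (cayley_point (x t) t)) = c"
    and x_diff: "\<And>t. x differentiable (at t)"
    using level_radius_exists[OF a] c_def by metis
  define \<Gamma> where "\<Gamma> t = cayley_point (x t) t" for t
  have "range \<Gamma> = {w \<in> unit_disc. Re (phi a w) = c}"
  proof
    show "range \<Gamma> \<subseteq> {w \<in> unit_disc. Re (phi a w) = c}"
      using cayley_point_in_unit_disc x_pos x_level by (auto simp: \<Gamma>_def)
    show "{w \<in> unit_disc. Re (phi a w) = c} \<subseteq> range \<Gamma>"
    proof
      fix w assume "w \<in> {w \<in> unit_disc. Re (phi a w) = c}"
      then have "w \<in> unit_disc" "Re (phi a w) = c" by auto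
      then obtain y t where "0 < y" "w = cayley_point y t" 
        using unit_disc_imp_cayley_point by metis
      moreover have "y = x t"
        using Re_phi_cayley_point_strict_mono[OF a, of y "x t" t]
          Re_phi_cayley_point_strict_mono[OF a, of "x t" y t]
          \<open>0 < y\<close> x_pos[of t] x_level[of t] \<open>Re (phi a w) = c\<close> \<open>w = cayley_point y t\<close>
        by (cases y "x t" rule: linorder_cases) auto
      ultimately show "w \<in> range \<Gamma>" by (simp add: \<Gamma>_def)
    qed
  qed
  moreover have "\<Gamma> differentiable (at t)" for t
    unfolding \<Gamma>_def by (rule cayley_point_curve_differentiable[OF x_diff x_pos])
  moreover have "\<exists>D>0. ((\<lambda>t. Im (phi a (\<Gamma> t))) has_real_derivative D) (at t)" for t
  proof -
    have height: "(\<lambda>t. Im (phi a (\<Gamma> t))) = level_height a c"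
      using Im_phi_cayley_point_on_level(1)[OF a x_pos x_level] by (simp add: \<Gamma>_def)
    have "0 \<le> (1 - a\<^sup>2) / 4" using a by (simp add: abs_square_le_1)
    moreover have "0 < (c - a / 2)\<^sup>2 + (1 - a\<^sup>2) / 4"
      by (rule Im_phi_cayley_point_on_level(2)[OF a x_pos x_level])
    ultimately obtain D where "0 < D" "(level_height a c has_real_derivative D) (at t)"
      unfolding level_height_def by (rule t_sqrt_has_pos_derivative)
    then show ?thesis unfolding height by blast
  qed
  ultimately show ?thesis
    unfolding vertical_level_curve_def c_def by blast
qed

lemma norm_convex_combination_less:
  fixes a1 a2 b1 b2 :: complex and t :: real
  assumes t: "0 \<le> t" "t \<le> 1"
    and "cmod b1 < cmod a1" "cmod b2 < cmod a2" "0 < Re (a1 * cnj a2 - b1 * cnj b2)"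
  shows "cmod (of_real t * b1 + of_real (1 - t) * b2) < cmod (of_real t * a1 + of_real (1 - t) * a2)"
proof -
  have sq: "(cmod (of_real t * a + of_real (1 - t) * b))\<^sup>2
      = t\<^sup>2 * (cmod a)\<^sup>2 + (1 - t)\<^sup>2 * (cmod b)\<^sup>2 + 2 * t * (1 - t) * Re (a * cnj b)" for a b :: complex
    by (simp only: cmod_power2) (simp add: power2_eq_square algebra_simps)
  have X1: "0 < (cmod a1)\<^sup>2 - (cmod b1)\<^sup>2" and X2: "0 < (cmod a2)\<^sup>2 - (cmod b2)\<^sup>2"
    using assms by (simp_all add: power_strict_mono)
  have "0 < t\<^sup>2 \<or> 0 < (1 - t)\<^sup>2" using t by auto
  then have "0 < t\<^sup>2 * ((cmod a1)\<^sup>2 - (cmod b1)\<^sup>2) \<or> 0 < (1 - t)\<^sup>2 * ((cmod a2)\<^sup>2 - (cmod b2)\<^sup>2)"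
    using mult_pos_pos[OF _ X1] mult_pos_pos[OF _ X2] by blast
  moreover have "0 \<le> t\<^sup>2 * ((cmod a1)\<^sup>2 - (cmod b1)\<^sup>2)" "0 \<le> (1 - t)\<^sup>2 * ((cmod a2)\<^sup>2 - (cmod b2)\<^sup>2)"
    using mult_nonneg_nonneg[OF zero_le_power2 less_imp_le[OF X1]]
      mult_nonneg_nonneg[OF zero_le_power2 less_imp_le[OF X2]] by blast+
  ultimately have "0 < t\<^sup>2 * ((cmod a1)\<^sup>2 - (cmod b1)\<^sup>2) + (1 - t)\<^sup>2 * ((cmod a2)\<^sup>2 - (cmod b2)\<^sup>2)"
    by linarith
  moreover have "0 \<le> 2 * (t * (1 - t)) * Re (a1 * cnj a2 - b1 * cnj b2)"
    using t assms(5) by simp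
  ultimately have "0 < t\<^sup>2 * ((cmod a1)\<^sup>2 - (cmod b1)\<^sup>2) + (1 - t)\<^sup>2 * ((cmod a2)\<^sup>2 - (cmod b2)\<^sup>2)
      + 2 * (t * (1 - t)) * Re (a1 * cnj a2 - b1 * cnj b2)"
    by linarith
  then have "(cmod (of_real t * b1 + of_real (1 - t) * b2))\<^sup>2 < (cmod (of_real t * a1 + of_real (1 - t) * a2))\<^sup>2"
    unfolding sq by (simp add: algebra_simps)
  then show ?thesis by (meson norm_ge_zero power_less_imp_less_base)
qed

lemma deriv_linear_combination:
  assumes "f1 holomorphic_on unit_disc" "f2 holomorphic_on unit_disc" "z \<in> unit_disc"
  shows "deriv (\<lambda>z. a * f1 z + b * f2 z) z = a * deriv f1 z + b * deriv f2 z"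
proof -
  have "(f1 has_field_derivative deriv f1 z) (at z)" "(f2 has_field_derivative deriv f2 z) (at z)"
    using assms holomorphic_derivI open_unit_disc by blast+
  then show ?thesis by (intro DERIV_imp_deriv derivative_eq_intros) auto
qed

lemma phi_convex_combination:
  "of_real t * phi a1 z + of_real (1 - t) * phi a2 z = phi (t * a1 + (1 - t) * a2) z"
  unfolding phi_def by (simp add: add_divide_distrib[symmetric] algebra_simps)

lemma phi_convex_combination_of_sums:
  assumes "h1 z + g1 z = phi a1 z" "h2 z + g2 z = phi a2 z"
  shows "(of_real t * h1 z + of_real (1 - t) * h2 z) + (of_real t * g1 z + of_real (1 - t) * g2 z)
       = phi (t * a1 + (1 - t) * a2) z"
proof -
  have "(of_real t * h1 z + of_real (1 - t) * h2 z) + (of_real t * g1 z + of_real (1 - t) * g2 z)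
      = of_real t * (h1 z + g1 z) + of_real (1 - t) * (h2 z + g2 z)"
    by (simp add: algebra_simps)
  then show ?thesis
    unfolding assms phi_convex_combination .
qed

lemma norm_deriv_less_if_in_SH:
  assumes "in_SH h g" "z \<in> unit_disc"
  shows "cmod (deriv g z) < cmod (deriv h z)"
  using assms by (auto simp: in_SH_def dilatation_def norm_divide divide_less_eq)

lemma norm_deriv_convex_combination_less:
  assumes SH: "in_SH h1 g1" "in_SH h2 g2" and z: "z \<in> unit_disc" and t: "0 \<le> t" "t \<le> 1"
    and "0 < Re ((1 - dilatation h1 g1 z * cnj (dilatation h2 g2 z)) * deriv h1 z * cnj (deriv h2 z))"
  shows "cmod (of_real t * deriv g1 z + of_real (1 - t) * deriv g2 z)
       < cmod (of_real t * deriv h1 z + of_real (1 - t) * deriv h2 z)"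
proof -
  have "deriv h1 z \<noteq> 0" "deriv h2 z \<noteq> 0" using SH z by (auto simp: in_SH_def)
  then have "(1 - dilatation h1 g1 z * cnj (dilatation h2 g2 z)) * deriv h1 z * cnj (deriv h2 z)
      = deriv h1 z * cnj (deriv h2 z) - deriv g1 z * cnj (deriv g2 z)"
    by (simp add: dilatation_def field_simps)
  with assms show ?thesis
    by (intro norm_convex_combination_less norm_deriv_less_if_in_SH) auto
qed

lemma in_SH_convex_combinationI:
  fixes t :: real and h1 g1 h2 g2 :: "complex \<Rightarrow> complex"
  defines "H \<equiv> \<lambda>z. of_real t * h1 z + of_real (1 - t) * h2 z"
    and "G \<equiv> \<lambda>z. of_real t * g1 z + of_real (1 - t) * g2 z"
  assumes SH: "in_SH h1 g1" "in_SH h2 g2"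
    and "inj_on (\<lambda>z. H z + cnj (G z)) unit_disc"
    and "\<And>z. z \<in> unit_disc \<Longrightarrow> cmod (deriv G z) < cmod (deriv H z)"
  shows "in_SH H G"
proof -
  have hol: "h1 holomorphic_on unit_disc" "g1 holomorphic_on unit_disc"
    "h2 holomorphic_on unit_disc" "g2 holomorphic_on unit_disc"
    using SH by (auto simp: in_SH_def)
  have "H 0 + cnj (G 0) = of_real t * (h1 0 + cnj (g1 0)) + of_real (1 - t) * (h2 0 + cnj (g2 0))"
    by (simp add: H_def G_def algebra_simps)
  also have "\<dots> = 0" using SH by (simp add: in_SH_def)
  finally have "H 0 + cnj (G 0) = 0" .
  moreover have "deriv H 0 = 1"
    using SH deriv_linear_combination[OF hol(1,3), of 0] by (simp add: H_def in_SH_def unit_disc_def)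
  moreover have "H holomorphic_on unit_disc" "G holomorphic_on unit_disc"
    using hol by (auto simp: H_def G_def intro!: holomorphic_intros)
  ultimately show ?thesis
    using assms(5,6) by (fastforce simp: in_SH_def dilatation_def norm_divide divide_less_eq)
qed

theorem mainTheorem9:
  fixes \<alpha>1 \<alpha>2 :: real and h1 g1 h2 g2 :: "complex \<Rightarrow> complex"
  assumes "\<alpha>1 \<in> {-1..1}" and "\<alpha>2 \<in> {-1..1}"
    and "in_SH h1 g1" and "in_SH h2 g2"
    and "\<forall>z\<in>unit_disc. h1 z + g1 z = z * (1 - of_real \<alpha>1 * z) / (1 - z\<^sup>2)"
    and "\<forall>z\<in>unit_disc. h2 z + g2 z = z * (1 - of_real \<alpha>2 * z) / (1 - z\<^sup>2)"
    and "\<forall>z\<in>unit_disc. Re ((1 - dilatation h1 g1 z * cnj (dilatation h2 g2 z))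
                             * deriv h1 z * cnj (deriv h2 z)) > 0"
  shows "\<forall>t::real\<in>{0..1}.
           in_SH (\<lambda>z. of_real t * h1 z + of_real (1 - t) * h2 z)
                 (\<lambda>z. of_real t * g1 z + of_real (1 - t) * g2 z) \<and>
           convex_dir_imag ((\<lambda>z. (of_real t * h1 z + of_real (1 - t) * h2 z)
                 + cnj (of_real t * g1 z + of_real (1 - t) * g2 z)) ` unit_disc)"
proof
  fix t :: real assume t: "t \<in> {0..1}"
  define H where "H = (\<lambda>z. of_real t * h1 z + of_real (1 - t) * h2 z)"
  define G where "G = (\<lambda>z. of_real t * g1 z + of_real (1 - t) * g2 z)"
  define b where "b = t * \<alpha>1 + (1 - t) * \<alpha>2"
  have hol: "h1 holomorphic_on unit_disc" "g1 holomorphic_on unit_disc"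
    "h2 holomorphic_on unit_disc" "g2 holomorphic_on unit_disc"
    using assms(3,4) by (auto simp: in_SH_def)
  then have holHG: "H holomorphic_on unit_disc" "G holomorphic_on unit_disc"
    unfolding H_def G_def by (auto intro!: holomorphic_intros)
  have dil: "cmod (deriv G z) < cmod (deriv H z)" if "z \<in> unit_disc" for z
    unfolding H_def G_def deriv_linear_combination[OF hol(1,3) that] deriv_linear_combination[OF hol(2,4) that]
    using assms(3,4,7) that t by (intro norm_deriv_convex_combination_less) auto
  have b: "-1 \<le> b" "b \<le> 1"
    using assms(1,2) t convex_bound_le[of \<alpha>1 1 \<alpha>2 t "1 - t"] convex_bound_le[of "-\<alpha>1" 1 "-\<alpha>2" t "1 - t"]
    by (auto simp: b_def)
  have "H z + G z = phi b z" if "z \<in> unit_disc" for z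
    using assms(5,6) that unfolding H_def G_def b_def phi_def[symmetric]
    by (intro phi_convex_combination_of_sums) auto
  from shear_inj_on_convex_dir_imag[OF holHG dil this phi_vertical_level_curve[OF b]]
  have shear: "inj_on (\<lambda>z. H z + cnj (G z)) unit_disc"
    "convex_dir_imag ((\<lambda>z. H z + cnj (G z)) ` unit_disc)"
    by simp_all
  have "in_SH H G"
    using assms(3,4) shear(1) dil unfolding H_def G_def by (rule in_SH_convex_combinationI)
  then show "in_SH H G \<and> convex_dir_imag ((\<lambda>z. H z + cnj (G z)) ` unit_disc)"
    using shear(2) ..
qed

end
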